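(* Let $f(x)=1-|1-2x|$ be the tent map, let $g:[0,1]\to[0,1]$ be a piecewise linear unimodal map, and let $h:[0,1]\to[0,1]$ be a homeomorphism with $h\circ f=g\circ h$. Let $\psi:[0,1]\to[0,1]$ be a continuous non-constant map with $g\circ\psi=\psi\circ g$, and suppose $[0,1]$ splits into exactly $t\ge 1$ maximal intervals of monotonicity of $\psi$. Then $\psi=h\circ\xi_t\circ h^{-1}$, where $$\xi_t(x)=\frac{1-(-1)^{[tx]}}{2}+(-1)^{[tx]}\{tx\},\quad x\in[0,1].$$
   Context: $[\cdot]$ denotes the integer part and $\{\cdot\}$ the fractional part of a real number; thus $\xi_t$ is the continuous piecewise linear map with $\xi_t(0)=0$, slopes $\pm t$, and all kinks at the points $j/t$, where it alternately takes the values $1$ and $0$. A map $g:[0,1]\to[0,1]$ is called unimodal if there is $v\in(0,1)$ such that $g$ is increasing on $[0,v]$, decreasing on $[v,1]$, and $g(0)=g(1)=0$, $g(v)=1$. *)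

theory Defs
  imports "HOL-Analysis.Analysis"
begin

definition tent :: "real \<Rightarrow> real" where
  "tent x = 1 - \<bar>1 - 2 * x\<bar>"

definition xi :: "nat \<Rightarrow> real \<Rightarrow> real" where
  "xi t x = (1 - (-1) powi \<lfloor>real t * x\<rfloor>) / 2 + (-1) powi \<lfloor>real t * x\<rfloor> * frac (real t * x)"

definition unimodal :: "(real \<Rightarrow> real) \<Rightarrow> bool" where
  "unimodal g \<longleftrightarrow> (\<exists>v \<in> {0<..<1}.
      monotone_on {0..v} (\<le>) (\<le>) g \<and> monotone_on {v..1} (\<le>) (\<ge>) g \<and>
      g 0 = 0 \<and> g 1 = 0 \<and> g v = 1)"

definition piecewise_linear :: "(real \<Rightarrow> real) \<Rightarrow> bool" where
  "piecewise_linear g \<longleftrightarrow> (\<exists>n::nat. \<exists>p::nat \<Rightarrow> real. n \<ge> 1 \<and> p 0 = 0 \<and> p n = 1 \<and>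
      (\<forall>i<n. p i < p (Suc i)) \<and>
      (\<forall>i<n. \<exists>m c. \<forall>x \<in> {p i..p (Suc i)}. g x = m * x + c))"

definition monotone_piece :: "(real \<Rightarrow> real) \<Rightarrow> real set \<Rightarrow> bool" where
  "monotone_piece \<psi> S \<longleftrightarrow> monotone_on S (\<le>) (\<le>) \<psi> \<or> monotone_on S (\<le>) (\<ge>) \<psi>"

definition monotonicity_laps :: "(real \<Rightarrow> real) \<Rightarrow> nat \<Rightarrow> bool" where
  "monotonicity_laps \<psi> t \<longleftrightarrow> (\<exists>a::nat \<Rightarrow> real. a 0 = 0 \<and> a t = 1 \<and>
      (\<forall>i<t. a i < a (Suc i)) \<and>
      (\<forall>i<t. monotone_piece \<psi> {a i..a (Suc i)}) \<and>
      (\<forall>i. Suc i < t \<longrightarrow> \<not> monotone_piece \<psi> {a i..a (Suc (Suc i))}))"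

end

theory Submission
  imports Defs
begin

text \<open>Conjugating by \<open>h\<close> turns \<open>\<psi>\<close> into \<open>\<phi> = k \<circ> \<psi> \<circ> h\<close>, which commutes with the
  tent map \<open>f\<close> and has the same \<open>t\<close> laps. Since \<open>f\<close> stretches every interval onto \<open>[0, 1]\<close>,
  \<open>\<phi>\<close> is strictly monotone on each lap. The \<open>f\<close>-preimages of a turning point of \<open>\<phi>\<close> with
  value in \<open>(0, 1)\<close> are again such turning points, so by counting there are none: \<open>\<phi>\<close>
  alternates between \<open>0\<close> and \<open>1\<close> at the partition points. Enumerating \<open>\<phi>\<inverse>{0, 1/2, 1}\<close> in
  increasing order once through the laps and once as the \<open>f\<close>-preimage of the partition
  points shows that the laps are the intervals \<open>[i/t, (i+1)/t]\<close>. On each of them \<open>\<phi>\<close> and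
  \<open>\<xi>\<^sub>t\<close> lie on the same side of \<open>1/2\<close>, where \<open>f\<close> doubles distances; hence the bounded
  function \<open>|\<phi> - \<xi>\<^sub>t|\<close> doubles along \<open>f\<close> and must vanish.\<close>

section \<open>The tent map and the triangle wave\<close>

lemma tent_le_half: "x \<le> 1/2 \<Longrightarrow> tent x = 2 * x"
  by (simp add: tent_def)

lemma tent_ge_half: "1/2 \<le> x \<Longrightarrow> tent x = 2 - 2 * x"
  by (simp add: tent_def)

lemma tent_range: "x \<in> {0..1} \<Longrightarrow> tent x \<in> {0..1}"
  by (auto simp: tent_def)

lemma tent_in_01_iff: "x \<in> {0..1} \<Longrightarrow> tent x \<in> {0, 1} \<longleftrightarrow> x \<in> {0, 1/2, 1}"
  by (cases "x \<le> 1/2") (auto simp: tent_le_half tent_ge_half)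

lemma tent_eq_iff: "x \<in> {0..1} \<Longrightarrow> y \<in> {0..1} \<Longrightarrow> tent x = y \<longleftrightarrow> x = y / 2 \<or> x = 1 - y / 2"
  by (cases "x \<le> 1/2") (auto simp: tent_le_half tent_ge_half field_simps)

lemma tent_dist_same_side:
  assumes "(u \<le> 1/2 \<and> v \<le> 1/2) \<or> (1/2 \<le> u \<and> 1/2 \<le> v)"
  shows "\<bar>tent u - tent v\<bar> = 2 * \<bar>u - v\<bar>"
  using assms by (auto simp: tent_le_half tent_ge_half abs_if)

lemma tent_less_self_iff: "y \<in> {0..1} \<Longrightarrow> tent y < y \<longleftrightarrow> 2/3 < y"
  by (cases "y \<le> 1/2") (auto simp: tent_le_half tent_ge_half)

text \<open>The even, \<open>2\<close>-periodic extension of the identity of \<open>[0, 1]\<close>.\<close>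
definition triangle_wave :: "real \<Rightarrow> real" where
  "triangle_wave z = (if even \<lfloor>z\<rfloor> then frac z else 1 - frac z)"

lemma xi_eq_triangle_wave: "xi t x = triangle_wave (real t * x)"
  by (simp add: xi_def triangle_wave_def power_int_minus_left)

lemma triangle_wave_of_int_add:
  assumes "0 \<le> r" "r \<le> 1"
  shows "triangle_wave (of_int n + r) = (if even n then r else 1 - r)"
proof (cases "r < 1")
  case True
  then have "\<lfloor>of_int n + r\<rfloor> = n" "frac (of_int n + r) = r"
    using assms by (simp_all add: floor_eq_iff frac_def)
  then show ?thesis by (simp add: triangle_wave_def)
next
  case False
  then show ?thesis using assms by (simp add: triangle_wave_def)
qed

lemma triangle_wave_range: "triangle_wave z \<in> {0..1}"
  by (simp add: triangle_wave_def frac_lt_1 less_imp_le)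

lemma triangle_wave_id: "x \<in> {0..1} \<Longrightarrow> triangle_wave x = x"
  using triangle_wave_of_int_add[of x 0] by simp

lemma triangle_wave_minus: "triangle_wave (- z) = triangle_wave z"
proof (cases "z \<in> \<int>")
  case True
  then obtain n where "z = of_int n" by (auto elim: Ints_cases)
  then show ?thesis
    using triangle_wave_of_int_add[of 0 "- n"] triangle_wave_of_int_add[of 0 n] by simp
next
  case False
  then have r: "0 \<le> 1 - frac z" "1 - frac z \<le> 1" "frac z \<noteq> 0"
    using frac_lt_1[of z] by (simp_all add: frac_eq_0_iff)
  have "triangle_wave (- z) = triangle_wave (of_int (- \<lfloor>z\<rfloor> - 1) + (1 - frac z))"
    by (simp add: frac_def)
  also have "\<dots> = (if even \<lfloor>z\<rfloor> then frac z else 1 - frac z)"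
    using r triangle_wave_of_int_add[of "1 - frac z" "- \<lfloor>z\<rfloor> - 1"] by simp
  finally show ?thesis by (simp only: triangle_wave_def)
qed

lemma triangle_wave_add_even: "triangle_wave (z + 2 * of_int m) = triangle_wave z"
proof -
  have "triangle_wave (z + 2 * of_int m) = triangle_wave (of_int (\<lfloor>z\<rfloor> + 2 * m) + frac z)"
    by (simp add: frac_def algebra_simps)
  also have "\<dots> = (if even \<lfloor>z\<rfloor> then frac z else 1 - frac z)"
    using triangle_wave_of_int_add[of "frac z" "\<lfloor>z\<rfloor> + 2 * m"] frac_lt_1[of z] by simp
  finally show ?thesis by (simp only: triangle_wave_def)
qed

lemma tent_triangle_wave: "tent (triangle_wave z) = triangle_wave (2 * z)"
proof -
  obtain n r where z: "z = of_int n + r" and r: "0 \<le> r" "r < 1"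
    using frac_lt_1 frac_ge_0 by (metis add.commute diff_add_cancel frac_def)
  have "tent (triangle_wave z) = tent r"
    using z r by (simp add: triangle_wave_of_int_add tent_def abs_minus_commute)
  also have "\<dots> = triangle_wave (2 * z)"
  proof (cases "r \<le> 1/2")
    case True
    have "triangle_wave (2 * z) = triangle_wave (of_int (2 * n) + 2 * r)" using z by simp
    then show ?thesis
      using True r triangle_wave_of_int_add[of "2 * r" "2 * n"] by (simp add: tent_le_half)
  next
    case False
    have "triangle_wave (2 * z) = triangle_wave (of_int (2 * n + 1) + (2 * r - 1))"
      using z by simp
    then show ?thesis
      using False r triangle_wave_of_int_add[of "2 * r - 1" "2 * n + 1"] by (simp add: tent_ge_half)
  qed
  finally show ?thesis .
qed

lemma xi_tent_commute:
  assumes "x \<in> {0..1}"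
  shows "xi t (tent x) = tent (xi t x)"
proof (cases "x \<le> 1/2")
  case True
  then show ?thesis by (simp add: tent_le_half xi_eq_triangle_wave tent_triangle_wave algebra_simps)
next
  case False
  have "xi t (tent x) = triangle_wave (- (2 * (real t * x)) + 2 * of_int (int t))"
    using False by (simp add: tent_ge_half xi_eq_triangle_wave algebra_simps)
  also have "\<dots> = triangle_wave (2 * (real t * x))"
    by (simp only: triangle_wave_add_even triangle_wave_minus)
  finally show ?thesis by (simp add: xi_eq_triangle_wave tent_triangle_wave)
qed

lemma funpow_tent: "x \<in> {0..1} \<Longrightarrow> (tent ^^ n) x = triangle_wave (2 ^ n * x)"
  by (induction n) (simp_all add: triangle_wave_id tent_triangle_wave algebra_simps)

lemma funpow_tent_onto:
  assumes "0 \<le> u" "u < v" "v \<le> 1"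
  obtains n where "{0..1} \<subseteq> (tent ^^ n) ` {u..v}"
proof -
  obtain n :: nat where n: "2 / (v - u) < 2 ^ n"
    using real_arch_pow[of 2 "2 / (v - u)"] by auto
  then have wide: "2 \<le> 2 ^ n * v - 2 ^ n * u"
    using assms by (simp add: pos_divide_less_eq right_diff_distrib)
  define j where "j = \<lceil>2 ^ n * u\<rceil>"
  have j: "2 ^ n * u \<le> of_int j" "of_int j + 1 \<le> 2 ^ n * v"
    unfolding j_def using wide ceiling_correct[of "2 ^ n * u"] by linarith+
  have onto: "s \<in> (tent ^^ n) ` {u..v}" if s: "s \<in> {0..1}" for s
  proof -
    define r where "r = (if even j then s else 1 - s)"
    have r: "0 \<le> r" "r \<le> 1" using s by (auto simp: r_def)
    define y where "y = (of_int j + r) / 2 ^ n"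
    have y: "y \<in> {u..v}"
      using j r by (auto simp: y_def pos_le_divide_eq pos_divide_le_eq mult.commute)
    have "(tent ^^ n) y = triangle_wave (2 ^ n * y)"
      using y assms by (intro funpow_tent) auto
    also have "\<dots> = triangle_wave (of_int j + r)" by (simp add: y_def)
    also have "\<dots> = (if even j then r else 1 - r)"
      by (rule triangle_wave_of_int_add[OF r])
    also have "\<dots> = s" by (simp add: r_def)
    finally have "s = (tent ^^ n) y" ..
    with y show ?thesis by (rule rev_image_eqI)
  qed
  show ?thesis by (rule that) (use onto in blast)
qed

section \<open>Monotone pieces\<close>

lemma monotone_piece_cong:
  "(\<And>x. x \<in> S \<Longrightarrow> f x = g x) \<Longrightarrow> monotone_piece f S \<longleftrightarrow> monotone_piece g S"
  unfolding monotone_piece_def monotone_on_def by auto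

lemma monotone_piece_subset: "monotone_piece f S \<Longrightarrow> T \<subseteq> S \<Longrightarrow> monotone_piece f T"
  unfolding monotone_piece_def using monotone_on_subset by blast

lemma monotone_piece_compose:
  assumes "monotone_piece f S" "monotone_piece g T" "g ` T \<subseteq> S"
  shows "monotone_piece (\<lambda>x. f (g x)) T"
  using assms unfolding monotone_piece_def monotone_on_def image_subset_iff
  by (elim disjE) blast+

lemma monotone_piece_tent_le_half: "monotone_piece tent {..1/2}"
  unfolding monotone_piece_def monotone_on_def by (auto simp: tent_le_half)

lemma monotone_piece_tent_ge_half: "monotone_piece tent {1/2..}"
  unfolding monotone_piece_def monotone_on_def by (auto simp: tent_ge_half)

lemma monotone_on_glue:
  fixes f :: "'a::linorder \<Rightarrow> 'b"
  assumes left: "monotone_on {u..c} (\<le>) R f" and right: "monotone_on {c..w} (\<le>) R f"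
    and "transp R"
  shows "monotone_on {u..w} (\<le>) R f"
proof (rule monotone_onI)
  fix x y assume xy: "x \<in> {u..w}" "y \<in> {u..w}" "x \<le> y"
  consider "y \<le> c" | "c \<le> x" | "x \<le> c" "c \<le> y" by (metis linear)
  then show "R (f x) (f y)"
  proof cases
    case 1
    then show ?thesis using xy by (intro monotone_onD[OF left]) auto
  next
    case 2
    then show ?thesis using xy by (intro monotone_onD[OF right]) auto
  next
    case 3
    then have "R (f x) (f c)" "R (f c) (f y)"
      using xy by (auto intro: monotone_onD[OF left] monotone_onD[OF right])
    then show ?thesis by (rule transpD[OF \<open>transp R\<close>])
  qed
qed

definition strict_monotone_piece :: "(real \<Rightarrow> real) \<Rightarrow> real set \<Rightarrow> bool" where
  "strict_monotone_piece f S \<longleftrightarrow> strict_mono_on S f \<or> strict_antimono_on S f"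

lemma strict_monotone_piece_inj_on: "strict_monotone_piece f S \<Longrightarrow> inj_on f S"
  unfolding strict_monotone_piece_def
  by (auto intro: strict_mono_on_imp_inj_on simp: strict_antimono_iff_antimono)

lemma strict_monotone_piece_if_nowhere_constant:
  assumes mono: "monotone_piece f {c..d}"
    and nonconst: "\<And>u v. c \<le> u \<Longrightarrow> u < v \<Longrightarrow> v \<le> d \<Longrightarrow> \<exists>x\<in>{u..v}. f x \<noteq> f u"
  shows "strict_monotone_piece f {c..d}"
proof -
  have inj: "inj_on f {c..d}"
  proof (rule linorder_inj_onI)
    fix u v assume uv: "u < v" "u \<in> {c..d}" "v \<in> {c..d}"
    obtain x where x: "x \<in> {u..v}" "f x \<noteq> f u" using nonconst uv by force
    then have x': "x \<in> {c..d}" "u \<le> x" "x \<le> v" using uv by auto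
    from mono show "f u \<noteq> f v"
      unfolding monotone_piece_def
    proof
      assume m: "mono_on {c..d} f"
      show ?thesis
        using monotone_onD[OF m uv(2) x'(1,2)] monotone_onD[OF m x'(1) uv(3) x'(3)] x(2) by auto
    next
      assume m: "antimono_on {c..d} f"
      show ?thesis
        using monotone_onD[OF m uv(2) x'(1,2)] monotone_onD[OF m x'(1) uv(3) x'(3)] x(2) by auto
    qed
  qed auto
  from mono show ?thesis
    unfolding monotone_piece_def strict_monotone_piece_def
    using mono_imp_strict_mono[OF _ inj] antimono_imp_strict_antimono[OF _ inj] by blast
qed

lemma monotone_piece_glue:
  assumes left: "strict_monotone_piece f {u..c}" and right: "strict_monotone_piece f {c..w}"
    and near: "monotone_piece f {p..q}" and pq: "u \<le> p" "p < c" "c < q" "q \<le> w"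
  shows "monotone_piece f {u..w}"
proof -
  have p: "p \<in> {u..c}" "p \<in> {p..q}" and q: "q \<in> {c..w}" "q \<in> {p..q}"
    and c: "c \<in> {u..c}" "c \<in> {c..w}" "c \<in> {p..q}" using pq by auto
  have near_c: "(f p \<le> f c \<and> f c \<le> f q) \<or> (f q \<le> f c \<and> f c \<le> f p)"
    using near pq unfolding monotone_piece_def
  proof (elim disjE)
    assume m: "mono_on {p..q} f"
    show ?thesis
      using monotone_onD[OF m p(2) c(3)] monotone_onD[OF m c(3) q(2)] pq by auto
  next
    assume m: "antimono_on {p..q} f"
    show ?thesis
      using monotone_onD[OF m p(2) c(3)] monotone_onD[OF m c(3) q(2)] pq by auto
  qed
  have no_peak: False if "strict_mono_on {u..c} f" "strict_antimono_on {c..w} f"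
    using monotone_onD[OF that(1) p(1) c(1) pq(2)] monotone_onD[OF that(2) c(2) q(1) pq(3)]
      near_c by auto
  have no_valley: False if "strict_antimono_on {u..c} f" "strict_mono_on {c..w} f"
    using monotone_onD[OF that(1) p(1) c(1) pq(2)] monotone_onD[OF that(2) c(2) q(1) pq(3)]
      near_c by auto
  from left right show ?thesis
    unfolding strict_monotone_piece_def
  proof (elim disjE)
    assume "strict_mono_on {u..c} f" "strict_mono_on {c..w} f"
    then have "mono_on {u..w} f"
      by (rule monotone_on_glue[OF strict_mono_on_imp_mono_on strict_mono_on_imp_mono_on
            transp_on_le])
    then show ?thesis by (simp add: monotone_piece_def)
  next
    assume "strict_antimono_on {u..c} f" "strict_antimono_on {c..w} f"
    then have "antimono_on {u..c} f" "antimono_on {c..w} f"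
      by (simp_all add: strict_antimono_iff_antimono)
    then have "antimono_on {u..w} f"
      by (rule monotone_on_glue[OF _ _ transp_on_ge])
    then show ?thesis by (simp add: monotone_piece_def)
  qed (use no_peak no_valley in blast)+
qed

definition locally_monotone_at :: "(real \<Rightarrow> real) \<Rightarrow> real \<Rightarrow> bool" where
  "locally_monotone_at f x \<longleftrightarrow>
     (\<exists>\<delta>>0. 0 \<le> x - \<delta> \<and> x + \<delta> \<le> 1 \<and> monotone_piece f {x - \<delta>..x + \<delta>})"

lemma locally_monotone_at_cong:
  assumes "\<And>y. y \<in> {0..1} \<Longrightarrow> f y = g y"
  shows "locally_monotone_at f x \<longleftrightarrow> locally_monotone_at g x"
proof -
  have "monotone_piece f {x - \<delta>..x + \<delta>} \<longleftrightarrow> monotone_piece g {x - \<delta>..x + \<delta>}"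
    if "0 \<le> x - \<delta>" "x + \<delta> \<le> 1" for \<delta>
    using that assms by (intro monotone_piece_cong) auto
  then show ?thesis unfolding locally_monotone_at_def by blast
qed

lemma locally_monotone_at_of_compose_tent:
  assumes x: "0 < x" "x < 1" "x \<noteq> 1/2" and lm: "locally_monotone_at (\<lambda>y. f (tent y)) x"
  shows "locally_monotone_at f (tent x)"
proof -
  obtain \<delta> where \<delta>: "\<delta> > 0" "monotone_piece (\<lambda>y. f (tent y)) {x - \<delta>..x + \<delta>}"
    using lm unfolding locally_monotone_at_def by blast
  obtain e and branch :: "real \<Rightarrow> real"
    where e: "0 < e" "e \<le> \<delta>" "0 \<le> tent x - 2 * e" "tent x + 2 * e \<le> 1"
      and branch_mono: "monotone_piece branch {tent x - 2 * e..tent x + 2 * e}"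
      and branch_into: "branch ` {tent x - 2 * e..tent x + 2 * e} \<subseteq> {x - e..x + e}"
      and branch_inv: "\<And>z. z \<in> {tent x - 2 * e..tent x + 2 * e} \<Longrightarrow> tent (branch z) = z"
  proof (cases "x < 1/2")
    case True
    define e where "e = min \<delta> (min x (1/2 - x))"
    have "0 < e" "e \<le> \<delta>" "e \<le> x" "e \<le> 1/2 - x" using \<delta> x True by (auto simp: e_def)
    moreover have "tent x = 2 * x" using True by (simp add: tent_le_half)
    moreover have "monotone_piece (\<lambda>z. z / 2) S" for S
      unfolding monotone_piece_def monotone_on_def by auto
    ultimately show ?thesis
      by (intro that[of e "\<lambda>z. z / 2"]) (auto simp: tent_le_half)
  next
    case False
    define e where "e = min \<delta> (min (1 - x) (x - 1/2))"
    have "0 < e" "e \<le> \<delta>" "e \<le> 1 - x" "e \<le> x - 1/2" using \<delta> x False by (auto simp: e_def)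
    moreover have "tent x = 2 - 2 * x" using False by (simp add: tent_ge_half)
    moreover have "monotone_piece (\<lambda>z. 1 - z / 2) S" for S
      unfolding monotone_piece_def monotone_on_def by auto
    ultimately show ?thesis
      by (intro that[of e "\<lambda>z. 1 - z / 2"]) (auto simp: tent_ge_half)
  qed
  define B where "B = {tent x - 2 * e..tent x + 2 * e}"
  have "monotone_piece (\<lambda>y. f (tent y)) {x - e..x + e}"
    using monotone_piece_subset[OF \<delta>(2)] e by auto
  then have "monotone_piece (\<lambda>z. f (tent (branch z))) B"
    using monotone_piece_compose branch_mono branch_into unfolding B_def by blast
  then have "monotone_piece f B"
    using monotone_piece_cong[of B "\<lambda>z. f (tent (branch z))" f] branch_inv by (auto simp: B_def)
  then show ?thesis
    unfolding locally_monotone_at_def using e by (intro exI[of _ "2 * e"]) (auto simp: B_def)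
qed

lemma locally_monotone_at_tent_compose:
  assumes cont: "continuous_on {0..1} f" and lm: "locally_monotone_at f x" and fx: "f x \<noteq> 1/2"
  shows "locally_monotone_at (\<lambda>y. tent (f y)) x"
proof -
  obtain \<delta> where \<delta>: "\<delta> > 0" "0 \<le> x - \<delta>" "x + \<delta> \<le> 1" "monotone_piece f {x - \<delta>..x + \<delta>}"
    using lm unfolding locally_monotone_at_def by blast
  then have "x \<in> {0..1}" by auto
  then obtain d where d: "d > 0" "\<And>y. y \<in> {0..1} \<Longrightarrow> dist y x < d \<Longrightarrow> dist (f y) (f x) < \<bar>f x - 1/2\<bar>"
    using cont fx unfolding continuous_on_iff by (metis zero_less_abs_iff right_minus_eq)
  define e where "e = min \<delta> (d / 2)"
  define B where "B = {x - e..x + e}"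
  have e: "0 < e" "e \<le> \<delta>" "e < d" using \<delta> d by (auto simp: e_def)
  have "monotone_piece f B" using monotone_piece_subset[OF \<delta>(4)] e by (auto simp: B_def)
  moreover have "\<bar>f y - f x\<bar> < \<bar>f x - 1/2\<bar>" if "y \<in> B" for y
    using d(2)[of y] that \<delta> e by (auto simp: B_def dist_real_def)
  then have "f ` B \<subseteq> (if f x < 1/2 then {..1/2} else {1/2..})"
    by (cases "f x < 1/2") (fastforce simp: abs_less_iff)+
  moreover have "monotone_piece tent (if f x < 1/2 then {..1/2} else {1/2..})"
    by (simp add: monotone_piece_tent_le_half monotone_piece_tent_ge_half)
  ultimately have "monotone_piece (\<lambda>y. tent (f y)) B"
    using monotone_piece_compose by blast
  then show ?thesis
    unfolding locally_monotone_at_def using \<delta> e by (intro exI[of _ e]) (auto simp: B_def)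
qed

lemma strict_mono_on_atMost_if_Suc:
  fixes f :: "nat \<Rightarrow> 'a::order"
  assumes "\<And>j. j < N \<Longrightarrow> f j < f (Suc j)"
  shows "strict_mono_on {..N} f"
  by (rule monotone_onI) (auto intro: lift_Suc_mono_less_ivl[of "{..<N}"] assms)

lemma strict_mono_on_atMost_card_less:
  fixes c :: "nat \<Rightarrow> 'a::linorder"
  assumes c: "strict_mono_on {..N} c" and j: "j \<le> N"
  shows "card {s \<in> c ` {..N}. s < c j} = j"
proof -
  have "{s \<in> c ` {..N}. s < c j} = c ` {..<j}"
    using j by (auto simp: strict_mono_on_less[OF c])
  moreover have "inj_on c {..<j}"
    using strict_mono_on_imp_inj_on[OF c] j by (auto elim: inj_on_subset)
  ultimately show ?thesis by (simp add: card_image)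
qed

lemma strict_mono_on_atMost_image_unique:
  fixes c d :: "nat \<Rightarrow> 'a::linorder"
  assumes c: "strict_mono_on {..N} c" and d: "strict_mono_on {..N} d"
    and eq: "c ` {..N} = d ` {..N}" and j: "j \<le> N"
  shows "c j = d j"
proof -
  have "c j \<in> d ` {..N}" using eq j by blast
  then obtain k where k: "k \<le> N" "c j = d k" by auto
  have "j = k"
    using strict_mono_on_atMost_card_less[OF c j] strict_mono_on_atMost_card_less[OF d k(1)]
    by (simp add: eq k(2))
  then show ?thesis using k by simp
qed

lemma empty_if_two_disjoint_injections:
  assumes T: "finite T" and f: "inj_on f T" and g: "inj_on g T"
    and disj: "f ` T \<inter> g ` T = {}" and into: "f ` T \<union> g ` T \<subseteq> T"
  shows "T = {}"
proof -
  have "card (f ` T \<union> g ` T) = card T + card T"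
    using card_Un_disjoint[OF finite_imageI[OF T] finite_imageI[OF T] disj]
    by (simp add: card_image[OF f] card_image[OF g])
  moreover have "card (f ` T \<union> g ` T) \<le> card T" using card_mono[OF T into] .
  ultimately show ?thesis using T by simp
qed

lemma bounded_expanding_le_zero:
  fixes D :: "'a \<Rightarrow> real"
  assumes bdd: "bdd_above (D ` S)" and into: "f ` S \<subseteq> S"
    and expand: "\<And>y. y \<in> S \<Longrightarrow> 2 * D y \<le> D (f y)" and x: "x \<in> S"
  shows "D x \<le> 0"
proof -
  define M where "M = Sup (D ` S)"
  have le_M: "D y \<le> M" if "y \<in> S" for y
    unfolding M_def using bdd that by (intro cSup_upper) auto
  have "D y \<le> M / 2" if "y \<in> S" for y
    using expand[OF that] le_M[of "f y"] into that by auto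
  then have "M \<le> M / 2"
    unfolding M_def using x by (intro cSup_least) (auto simp: M_def)
  then show ?thesis using le_M[OF x] by simp
qed

section \<open>Continuous maps commuting with the tent map\<close>

locale tent_commuting_laps =
  fixes \<phi> :: "real \<Rightarrow> real" and t :: nat and a :: "nat \<Rightarrow> real"
  assumes continuous: "continuous_on {0..1} \<phi>"
    and maps_into: "\<And>x. x \<in> {0..1} \<Longrightarrow> \<phi> x \<in> {0..1}"
    and commutes: "\<And>x. x \<in> {0..1} \<Longrightarrow> \<phi> (tent x) = tent (\<phi> x)"
    and nonconstant: "\<exists>x\<in>{0..1}. \<exists>y\<in>{0..1}. \<phi> x \<noteq> \<phi> y"
    and t_pos: "1 \<le> t"
    and a_0: "a 0 = 0" and a_t: "a t = 1" and a_Suc: "\<And>i. i < t \<Longrightarrow> a i < a (Suc i)"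
    and lap_monotone: "\<And>i. i < t \<Longrightarrow> monotone_piece \<phi> {a i..a (Suc i)}"
    and lap_maximal: "\<And>i. Suc i < t \<Longrightarrow> \<not> monotone_piece \<phi> {a i..a (Suc (Suc i))}"
begin

lemma a_less: "i < j \<Longrightarrow> j \<le> t \<Longrightarrow> a i < a j"
  by (rule lift_Suc_mono_less_ivl[of "{..<t}"]) (auto intro: a_Suc)

lemma a_range: "i \<le> t \<Longrightarrow> a i \<in> {0..1}"
  using a_less[of 0 i] a_less[of i t] a_0 a_t by (cases "i = 0"; cases "i = t") auto

lemma a_inner: "0 < i \<Longrightarrow> i < t \<Longrightarrow> a i \<in> {0<..<1}"
  using a_less[of 0 i] a_less[of i t] a_0 a_t by auto

lemma lap_containing:
  assumes x: "x \<in> {0..1}"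
  obtains i where "i < t" "x \<in> {a i..a (Suc i)}"
proof -
  define I where "I = {i. i < t \<and> a i \<le> x}"
  have I: "finite I" "0 \<in> I" using t_pos a_0 x by (auto simp: I_def)
  define i where "i = Max I"
  have "i \<in> I" unfolding i_def using I by (intro Max_in) auto
  then have i: "i < t" "a i \<le> x" by (auto simp: I_def)
  have "x \<le> a (Suc i)"
  proof (cases "Suc i < t")
    case True
    then have "Suc i \<notin> I" using Max_ge[OF I(1), of "Suc i"] by (auto simp: i_def)
    then show ?thesis using True by (auto simp: I_def)
  next
    case False
    then have "Suc i = t" using i(1) by simp
    then show ?thesis using a_t x by simp
  qed
  then show ?thesis using that i by auto
qed

lemma commutes_funpow: "x \<in> {0..1} \<Longrightarrow> \<phi> ((tent ^^ n) x) = (tent ^^ n) (\<phi> x)"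
proof (induction n)
  case (Suc n)
  have "(tent ^^ n) x \<in> {0..1}"
    using triangle_wave_range[of "2 ^ n * x"] funpow_tent[OF Suc.prems] by simp
  then show ?case using Suc by (simp add: commutes)
qed simp

lemma nowhere_constant:
  assumes "0 \<le> u" "u < v" "v \<le> 1"
  shows "\<exists>x\<in>{u..v}. \<phi> x \<noteq> \<phi> u"
proof (rule ccontr)
  assume "\<not> ?thesis"
  then have const: "\<And>x. x \<in> {u..v} \<Longrightarrow> \<phi> x = \<phi> u" by blast
  obtain n where onto: "{0..1} \<subseteq> (tent ^^ n) ` {u..v}" using funpow_tent_onto assms by blast
  have "\<phi> s = (tent ^^ n) (\<phi> u)" if s: "s \<in> {0..1}" for s
  proof -
    obtain y where y: "y \<in> {u..v}" "s = (tent ^^ n) y" using onto s by blast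
    then show ?thesis using commutes_funpow[of y n] const[OF y(1)] assms by auto
  qed
  then show False using nonconstant by force
qed

lemma lap_strict: "i < t \<Longrightarrow> strict_monotone_piece \<phi> {a i..a (Suc i)}"
  using a_range[of i] a_range[of "Suc i"]
  by (intro strict_monotone_piece_if_nowhere_constant lap_monotone nowhere_constant) auto

lemma phi_0: "\<phi> 0 = 0"
proof -
  have "\<phi> 0 = tent (\<phi> 0)" using commutes[of 0] by (simp add: tent_def)
  then have "\<phi> 0 = 0 \<or> \<phi> 0 = 2/3" by (auto simp: tent_def split: abs_split)
  moreover have "\<phi> 0 \<noteq> 2/3"
  proof
    assume phi0: "\<phi> 0 = 2/3"
    have a1: "0 < a 1" "a 1 \<le> 1" using a_less[of 0 1] a_range[of 1] t_pos a_0 by auto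
    define x where "x = a 1 / 2"
    have x: "0 < x" "x < a 1" "x \<in> {0..1}" using a1 by (auto simp: x_def)
    have "\<phi> (a 1) = tent (\<phi> x)"
      using commutes[OF x(3)] a1 by (simp add: x_def tent_le_half)
    moreover have "\<phi> 0 < \<phi> x \<and> \<phi> x < \<phi> (a 1) \<or> \<phi> (a 1) < \<phi> x \<and> \<phi> x < \<phi> 0"
    proof -
      have mem: "0 \<in> {a 0..a (Suc 0)}" "x \<in> {a 0..a (Suc 0)}" "a 1 \<in> {a 0..a (Suc 0)}"
        using x a_0 by auto
      from t_pos have "0 < t" by simp
      from lap_strict[OF this] show ?thesis
        unfolding strict_monotone_piece_def
      proof (elim disjE)
        assume m: "strict_mono_on {a 0..a (Suc 0)} \<phi>"
        show ?thesis using monotone_onD[OF m mem(1,2)] monotone_onD[OF m mem(2,3)] x by simp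
      next
        assume m: "strict_antimono_on {a 0..a (Suc 0)} \<phi>"
        show ?thesis using monotone_onD[OF m mem(1,2)] monotone_onD[OF m mem(2,3)] x by simp
      qed
    qed
    ultimately show False
      using phi0 tent_less_self_iff[of "\<phi> x"] maps_into[OF x(3)] by auto
  qed
  ultimately show ?thesis by blast
qed

lemma not_locally_monotone_at_turning:
  assumes i: "0 < i" "i < t"
  shows "\<not> locally_monotone_at \<phi> (a i)"
proof
  assume "locally_monotone_at \<phi> (a i)"
  then obtain \<delta> where \<delta>: "\<delta> > 0" "monotone_piece \<phi> {a i - \<delta>..a i + \<delta>}"
    unfolding locally_monotone_at_def by blast
  obtain m where m: "i = Suc m" using i by (cases i) auto
  define e where "e = min \<delta> (min (a i - a m) (a (Suc i) - a i))"
  have e: "0 < e" "e \<le> \<delta>" "e \<le> a i - a m" "e \<le> a (Suc i) - a i"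
    using \<delta> a_Suc[of m] a_Suc[of i] i m by (auto simp: e_def)
  have "monotone_piece \<phi> {a m..a (Suc i)}"
  proof (rule monotone_piece_glue)
    show "strict_monotone_piece \<phi> {a m..a i}" using lap_strict[of m] i m by simp
    show "strict_monotone_piece \<phi> {a i..a (Suc i)}" using lap_strict[of i] i by simp
    show "monotone_piece \<phi> {a i - e..a i + e}" using monotone_piece_subset[OF \<delta>(2)] e by auto
  qed (use e in auto)
  then show False using lap_maximal[of m] i m by simp
qed

lemma locally_monotone_at_off_partition:
  assumes x: "x \<in> {0..1}" "x \<notin> a ` {..t}"
  shows "locally_monotone_at \<phi> x"
proof -
  obtain i where i: "i < t" "x \<in> {a i..a (Suc i)}" using lap_containing x(1) by blast
  have "x \<noteq> a i" "x \<noteq> a (Suc i)" using x(2) i(1) by auto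
  then have inside: "a i < x" "x < a (Suc i)" using i(2) by auto
  define e where "e = min (x - a i) (a (Suc i) - x)"
  have "{x - e..x + e} \<subseteq> {a i..a (Suc i)}" by (auto simp: e_def)
  then have "monotone_piece \<phi> {x - e..x + e}"
    using monotone_piece_subset[OF lap_monotone[OF i(1)]] by blast
  moreover have "0 < e" "0 \<le> x - e" "x + e \<le> 1"
    using inside a_range[of i] a_range[of "Suc i"] i(1) by (auto simp: e_def)
  ultimately show ?thesis unfolding locally_monotone_at_def by blast
qed

definition inner_turning_points :: "real set" where
  "inner_turning_points = {c \<in> a ` {0<..<t}. \<phi> c \<in> {0<..<1}}"

text \<open>\<open>\<phi> \<circ> tent = tent \<circ> \<phi>\<close> fails to be monotone near \<open>x\<close>, and since \<open>\<phi> x \<noteq> 1/2\<close> this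
  forces \<open>\<phi>\<close> itself to turn at \<open>x\<close>.\<close>
lemma inner_turning_points_tent_preimage:
  assumes c: "c \<in> inner_turning_points" and x: "x \<in> {0..1}" "tent x = c"
  shows "x \<in> inner_turning_points"
proof -
  obtain i where i: "0 < i" "i < t" "c = a i" and phi_c: "\<phi> c \<in> {0<..<1}"
    using c unfolding inner_turning_points_def by auto
  have "tent x \<notin> {0, 1}" using a_inner[OF i(1,2)] i(3) x(2) by auto
  then have x': "0 < x" "x < 1" "x \<noteq> 1/2" using tent_in_01_iff[OF x(1)] x(1) by auto
  have "tent (\<phi> x) \<notin> {0, 1}" using commutes[OF x(1)] x(2) phi_c by auto
  then have "\<phi> x \<noteq> 1/2" "\<phi> x \<noteq> 0" "\<phi> x \<noteq> 1"
    using tent_in_01_iff[OF maps_into[OF x(1)]] by auto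
  have "\<not> locally_monotone_at (\<lambda>y. \<phi> (tent y)) x"
    using locally_monotone_at_of_compose_tent[OF x'] not_locally_monotone_at_turning[OF i(1,2)]
      x(2) i(3) by auto
  then have "\<not> locally_monotone_at (\<lambda>y. tent (\<phi> y)) x"
    using locally_monotone_at_cong[of "\<lambda>y. \<phi> (tent y)" "\<lambda>y. tent (\<phi> y)"] commutes by auto
  then have "\<not> locally_monotone_at \<phi> x"
    using locally_monotone_at_tent_compose[OF continuous] \<open>\<phi> x \<noteq> 1/2\<close> by blast
  then obtain j where "j \<le> t" "x = a j" using locally_monotone_at_off_partition x(1) by blast
  moreover have "j \<noteq> 0" using x'(1) a_0 \<open>x = a j\<close> by (metis less_irrefl)
  moreover have "j \<noteq> t" using x'(2) a_t \<open>x = a j\<close> by (metis less_irrefl)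
  moreover have "\<phi> x \<in> {0<..<1}"
    using maps_into[OF x(1)] \<open>\<phi> x \<noteq> 0\<close> \<open>\<phi> x \<noteq> 1\<close> by auto
  ultimately show ?thesis unfolding inner_turning_points_def by auto
qed

lemma inner_turning_points_empty: "inner_turning_points = {}"
proof (rule empty_if_two_disjoint_injections)
  have inner: "c \<in> {0<..<1}" if "c \<in> inner_turning_points" for c
    using that a_inner unfolding inner_turning_points_def by auto
  show "finite inner_turning_points" unfolding inner_turning_points_def by auto
  show "inj_on (\<lambda>c. c / 2) inner_turning_points" "inj_on (\<lambda>c. 1 - c / 2) inner_turning_points"
    by (auto intro: inj_onI)
  show "(\<lambda>c. c / 2) ` inner_turning_points \<inter> (\<lambda>c. 1 - c / 2) ` inner_turning_points = {}"
    using inner by (auto dest!: inner)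
  show "(\<lambda>c. c / 2) ` inner_turning_points \<union> (\<lambda>c. 1 - c / 2) ` inner_turning_points
      \<subseteq> inner_turning_points"
  proof (intro Un_least image_subsetI)
    fix c assume c: "c \<in> inner_turning_points"
    with inner have "c \<in> {0<..<1}" by blast
    then show "c / 2 \<in> inner_turning_points"
      using inner_turning_points_tent_preimage[OF c, of "c / 2"] by (simp add: tent_le_half)
  next
    fix c assume c: "c \<in> inner_turning_points"
    with inner have "c \<in> {0<..<1}" by blast
    then show "1 - c / 2 \<in> inner_turning_points"
      using inner_turning_points_tent_preimage[OF c, of "1 - c / 2"] by (simp add: tent_ge_half)
  qed
qed

lemma phi_1: "\<phi> 1 \<in> {0, 1}"
proof -
  have "tent (\<phi> 1) = 0" using commutes[of 1] phi_0 by (simp add: tent_def)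
  then show ?thesis using tent_eq_iff[of "\<phi> 1" 0] maps_into[of 1] by auto
qed

lemma phi_partition: "i \<le> t \<Longrightarrow> \<phi> (a i) = (if even i then 0 else 1)"
proof (induction i)
  case 0
  then show ?case using phi_0 a_0 by simp
next
  case (Suc i)
  have "\<phi> (a (Suc i)) \<in> {0, 1}"
  proof (cases "Suc i = t")
    case True
    then show ?thesis using phi_1 a_t by simp
  next
    case False
    then have "a (Suc i) \<in> a ` {0<..<t}" using Suc.prems by auto
    then have "\<phi> (a (Suc i)) \<notin> {0<..<1}"
      using inner_turning_points_empty unfolding inner_turning_points_def by blast
    then show ?thesis using maps_into[OF a_range[OF Suc.prems]] by auto
  qed
  moreover have "\<phi> (a (Suc i)) \<noteq> \<phi> (a i)"
  proof
    assume "\<phi> (a (Suc i)) = \<phi> (a i)"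
    moreover have "i < t" using Suc.prems by simp
    ultimately show False
      using inj_onD[OF strict_monotone_piece_inj_on[OF lap_strict], of i "a (Suc i)" "a i"] a_Suc
      by force
  qed
  ultimately show ?case using Suc by auto
qed

lemma lap_increasing:
  assumes i: "i < t" and "even i"
  shows "strict_mono_on {a i..a (Suc i)} \<phi>"
proof -
  have "\<phi> (a i) < \<phi> (a (Suc i))"
    using phi_partition[of i] phi_partition[of "Suc i"] i \<open>even i\<close> by simp
  then have "\<not> strict_antimono_on {a i..a (Suc i)} \<phi>"
    using monotone_onD[of "{a i..a (Suc i)}" "(<)" "\<lambda>x y. y < x" \<phi> "a i" "a (Suc i)"] a_Suc[OF i]
    by auto
  then show ?thesis using lap_strict[OF i] unfolding strict_monotone_piece_def by blast
qed

lemma lap_decreasing: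
  assumes i: "i < t" and "odd i"
  shows "strict_antimono_on {a i..a (Suc i)} \<phi>"
proof -
  have "\<phi> (a (Suc i)) < \<phi> (a i)"
    using phi_partition[of i] phi_partition[of "Suc i"] i \<open>odd i\<close> by simp
  then have "\<not> strict_mono_on {a i..a (Suc i)} \<phi>"
    using monotone_onD[of "{a i..a (Suc i)}" "(<)" "(<)" \<phi> "a i" "a (Suc i)"] a_Suc[OF i]
    by auto
  then show ?thesis using lap_strict[OF i] unfolding strict_monotone_piece_def by blast
qed

lemma phi_inside_lap:
  assumes i: "i < t" and x: "a i < x" "x < a (Suc i)"
  shows "\<phi> x \<in> {0<..<1}"
proof -
  have mem: "a i \<in> {a i..a (Suc i)}" "x \<in> {a i..a (Suc i)}" "a (Suc i) \<in> {a i..a (Suc i)}"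
    using x by auto
  have vals: "\<phi> (a i) = (if even i then 0 else 1)" "\<phi> (a (Suc i)) = (if even i then 1 else 0)"
    using phi_partition[of i] phi_partition[of "Suc i"] i by auto
  show ?thesis
  proof (cases "even i")
    case True
    with lap_increasing[OF i True] show ?thesis
      using monotone_onD[of _ "(<)" "(<)" \<phi>, OF _ mem(1,2) x(1)]
        monotone_onD[of _ "(<)" "(<)" \<phi>, OF _ mem(2,3) x(2)] vals by auto
  next
    case False
    with lap_decreasing[OF i False] show ?thesis
      using monotone_onD[of _ "(<)" _ \<phi>, OF _ mem(1,2) x(1)]
        monotone_onD[of _ "(<)" _ \<phi>, OF _ mem(2,3) x(2)] vals by auto
  qed
qed

lemma phi_in_01_iff:
  assumes x: "x \<in> {0..1}"
  shows "\<phi> x \<in> {0, 1} \<longleftrightarrow> x \<in> a ` {..t}"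
proof
  assume phi_x: "\<phi> x \<in> {0, 1}"
  obtain i where i: "i < t" "x \<in> {a i..a (Suc i)}" using lap_containing x by blast
  have "x = a i \<or> x = a (Suc i)"
    using phi_inside_lap[OF i(1), of x] phi_x i(2) by force
  then show "x \<in> a ` {..t}" using i(1) by auto
qed (use phi_partition in \<open>auto split: if_splits\<close>)

lemma mid_exists: "i < t \<Longrightarrow> \<exists>y. a i < y \<and> y < a (Suc i) \<and> \<phi> y = 1/2"
proof -
  assume i: "i < t"
  have le: "a i \<le> a (Suc i)" using a_Suc[OF i] by simp
  have cont: "continuous_on {a i..a (Suc i)} \<phi>"
    using a_range[of i] a_range[of "Suc i"] i by (intro continuous_on_subset[OF continuous]) auto
  have vals: "\<phi> (a i) = (if even i then 0 else 1)" "\<phi> (a (Suc i)) = (if even i then 1 else 0)"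
    using phi_partition[of i] phi_partition[of "Suc i"] i by auto
  obtain y where y: "a i \<le> y" "y \<le> a (Suc i)" "\<phi> y = 1/2"
    using IVT'[of \<phi> "a i" "1/2" "a (Suc i)", OF _ _ le cont]
      IVT2'[of \<phi> "a (Suc i)" "1/2" "a i", OF _ _ le cont] vals
    by (cases "even i") auto
  moreover have "y \<noteq> a i" "y \<noteq> a (Suc i)" using y(3) vals by (auto split: if_splits)
  ultimately show ?thesis by (intro exI[of _ y]) auto
qed

definition mid :: "nat \<Rightarrow> real" where
  "mid i = (SOME y. a i < y \<and> y < a (Suc i) \<and> \<phi> y = 1/2)"

lemma mid: "i < t \<Longrightarrow> a i < mid i \<and> mid i < a (Suc i) \<and> \<phi> (mid i) = 1/2"
  unfolding mid_def by (rule someI_ex) (rule mid_exists)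

lemma phi_half_iff:
  assumes x: "x \<in> {0..1}"
  shows "\<phi> x = 1/2 \<longleftrightarrow> x \<in> mid ` {..<t}"
proof
  assume half: "\<phi> x = 1/2"
  obtain i where i: "i < t" "x \<in> {a i..a (Suc i)}" using lap_containing x by blast
  have "mid i \<in> {a i..a (Suc i)}" "\<phi> (mid i) = \<phi> x" using mid[OF i(1)] half by auto
  then have "x = mid i" using inj_onD[OF strict_monotone_piece_inj_on[OF lap_strict[OF i(1)]]] i(2)
    by metis
  then show "x \<in> mid ` {..<t}" using i(1) by auto
qed (use mid in auto)

definition lap_nodes :: "nat \<Rightarrow> real" where
  "lap_nodes j = (if even j then a (j div 2) else mid (j div 2))"

definition tent_nodes :: "nat \<Rightarrow> real" where
  "tent_nodes j = (if j \<le> t then a j / 2 else 1 - a (2 * t - j) / 2)"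

lemma lap_nodes_strict_mono: "strict_mono_on {..2 * t} lap_nodes"
proof (rule strict_mono_on_atMost_if_Suc)
  fix j assume j: "j < 2 * t"
  then have "j div 2 < t" by simp
  moreover have "odd j \<Longrightarrow> Suc j div 2 = Suc (j div 2)" by presburger
  ultimately show "lap_nodes j < lap_nodes (Suc j)"
    using mid[of "j div 2"] by (auto simp: lap_nodes_def)
qed

lemma tent_nodes_strict_mono: "strict_mono_on {..2 * t} tent_nodes"
proof (rule strict_mono_on_atMost_if_Suc)
  fix j assume j: "j < 2 * t"
  consider "Suc j \<le> t" | "j = t" | "t < j" by linarith
  then show "tent_nodes j < tent_nodes (Suc j)"
  proof cases
    case 1
    then show ?thesis using a_Suc[of j] by (simp add: tent_nodes_def)
  next
    case 2
    then show ?thesis using a_less[of "t - 1" t] a_t t_pos by (simp add: tent_nodes_def)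
  next
    case 3
    then show ?thesis using a_less[of "2 * t - Suc j" "2 * t - j"] j by (simp add: tent_nodes_def)
  qed
qed

lemma level_set_lap_nodes: "{x \<in> {0..1}. \<phi> x \<in> {0, 1/2, 1}} = lap_nodes ` {..2 * t}"
proof (intro equalityI subsetI)
  fix x assume "x \<in> {x \<in> {0..1}. \<phi> x \<in> {0, 1/2, 1}}"
  then have x: "x \<in> {0..1}" "\<phi> x \<in> {0, 1} \<or> \<phi> x = 1/2" by auto
  from x(2) show "x \<in> lap_nodes ` {..2 * t}"
  proof
    assume "\<phi> x \<in> {0, 1}"
    then obtain i where "i \<le> t" "x = a i" using phi_in_01_iff[OF x(1)] by auto
    then show ?thesis by (intro image_eqI[of _ _ "2 * i"]) (auto simp: lap_nodes_def)
  next
    assume "\<phi> x = 1/2"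
    then obtain i where "i < t" "x = mid i" using phi_half_iff[OF x(1)] by auto
    then show ?thesis by (intro image_eqI[of _ _ "2 * i + 1"]) (auto simp: lap_nodes_def)
  qed
next
  fix x assume "x \<in> lap_nodes ` {..2 * t}"
  then obtain j where j: "j \<le> 2 * t" "x = lap_nodes j" by auto
  show "x \<in> {x \<in> {0..1}. \<phi> x \<in> {0, 1/2, 1}}"
  proof (cases "even j")
    case True
    then show ?thesis using j a_range[of "j div 2"] phi_partition[of "j div 2"]
      by (auto simp: lap_nodes_def)
  next
    case False
    then have i: "j div 2 < t" using j by presburger
    then show ?thesis using j False mid[OF i] a_range[of "j div 2"] a_range[of "Suc (j div 2)"]
      by (auto simp: lap_nodes_def)
  qed
qed

lemma tent_preimage_partition:
  assumes x: "x \<in> {0..1}"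
  shows "tent x \<in> a ` {..t} \<longleftrightarrow> x \<in> tent_nodes ` {..2 * t}"
proof
  assume "tent x \<in> a ` {..t}"
  then obtain j where j: "j \<le> t" "tent x = a j" by auto
  then have "x = a j / 2 \<or> x = 1 - a j / 2" using tent_eq_iff[OF x a_range[OF j(1)]] by simp
  then show "x \<in> tent_nodes ` {..2 * t}"
  proof
    assume "x = a j / 2"
    then show ?thesis using j(1) by (intro image_eqI[of _ _ j]) (auto simp: tent_nodes_def)
  next
    assume x_eq: "x = 1 - a j / 2"
    show ?thesis
    proof (cases "j = t")
      case True
      then show ?thesis using x_eq a_t by (intro image_eqI[of _ _ t]) (auto simp: tent_nodes_def)
    next
      case False
      then show ?thesis
        using x_eq j(1) by (intro image_eqI[of _ _ "2 * t - j"]) (auto simp: tent_nodes_def)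
    qed
  qed
next
  assume "x \<in> tent_nodes ` {..2 * t}"
  then obtain j where j: "j \<le> 2 * t" "x = tent_nodes j" by auto
  show "tent x \<in> a ` {..t}"
  proof (cases "j \<le> t")
    case True
    then have "tent x = a j" using j a_range[of j] by (simp add: tent_nodes_def tent_le_half)
    then show ?thesis using True by auto
  next
    case False
    then show ?thesis using j a_range[of "2 * t - j"]
      by (auto simp: tent_nodes_def tent_ge_half intro!: image_eqI[of _ _ "2 * t - j"])
  qed
qed

lemma level_set_tent_nodes: "{x \<in> {0..1}. \<phi> x \<in> {0, 1/2, 1}} = tent_nodes ` {..2 * t}"
proof -
  have "\<phi> x \<in> {0, 1/2, 1} \<longleftrightarrow> x \<in> tent_nodes ` {..2 * t}" if x: "x \<in> {0..1}" for x
  proof -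
    have "\<phi> x \<in> {0, 1/2, 1} \<longleftrightarrow> \<phi> (tent x) \<in> {0, 1}"
      using tent_in_01_iff[OF maps_into[OF x]] commutes[OF x] by simp
    also have "\<dots> \<longleftrightarrow> tent x \<in> a ` {..t}" using phi_in_01_iff tent_range[OF x] by blast
    also have "\<dots> \<longleftrightarrow> x \<in> tent_nodes ` {..2 * t}" using tent_preimage_partition[OF x] .
    finally show ?thesis .
  qed
  moreover have "tent_nodes j \<in> {0..1}" for j
  proof (cases "j \<le> t")
    case False
    then have "a (2 * t - j) \<in> {0..1}" by (intro a_range) simp
    with False show ?thesis by (simp add: tent_nodes_def)
  qed (use a_range[of j] in \<open>simp add: tent_nodes_def\<close>)
  ultimately show ?thesis by blast
qed

lemma lap_nodes_eq_tent_nodes: "j \<le> 2 * t \<Longrightarrow> lap_nodes j = tent_nodes j"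
  using strict_mono_on_atMost_image_unique[OF lap_nodes_strict_mono tent_nodes_strict_mono]
    level_set_lap_nodes level_set_tent_nodes by simp

text \<open>Comparing the two enumerations gives \<open>a i = a (2 i) / 2\<close> or \<open>a i = 1 - a (2 t - 2 i) / 2\<close>,
  so the deviation of \<open>a\<close> from the uniform partition at least doubles along \<open>i \<mapsto> 2 i\<close>
  (reflected at \<open>t\<close>), which forces it to vanish.\<close>
lemma a_eq: "i \<le> t \<Longrightarrow> a i = real i / real t"
proof -
  define dev where "dev i = \<bar>a i - real i / real t\<bar>" for i
  define double where "double i = (if 2 * i \<le> t then 2 * i else 2 * t - 2 * i)" for i
  have t: "real t > 0" using t_pos by simp
  have "2 * dev i \<le> dev (double i)" if i: "i \<le> t" for i
  proof -
    have ai: "a i = tent_nodes (2 * i)"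
      using lap_nodes_eq_tent_nodes[of "2 * i"] i by (simp add: lap_nodes_def)
    show ?thesis
    proof (cases "2 * i \<le> t")
      case True
      then have "a i = a (2 * i) / 2" by (simp add: ai tent_nodes_def)
      then have eq: "a i - real i / real t = (a (2 * i) - real (2 * i) / real t) / 2"
        by (simp add: field_simps)
      show ?thesis using True unfolding dev_def double_def by (subst eq) simp
    next
      case False
      then have ai': "a i = 1 - a (2 * t - 2 * i) / 2" by (simp add: ai tent_nodes_def)
      have eq: "a i - real i / real t = - (a (2 * t - 2 * i) - real (2 * t - 2 * i) / real t) / 2"
        using t i by (simp add: ai' of_nat_diff field_simps)
      show ?thesis using False unfolding dev_def double_def by (subst eq) simp
    qed
  qed
  moreover have "double ` {..t} \<subseteq> {..t}" by (auto simp: double_def)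
  ultimately have "i \<le> t \<Longrightarrow> dev i \<le> 0"
    by (intro bounded_expanding_le_zero[of dev "{..t}" double]) auto
  then show "i \<le> t \<Longrightarrow> a i = real i / real t" by (simp add: dev_def)
qed

lemma mid_eq:
  assumes i: "i < t"
  shows "mid i = (2 * real i + 1) / (2 * real t)"
proof -
  have t: "real t > 0" using t_pos by simp
  have m: "mid i = tent_nodes (2 * i + 1)"
    using lap_nodes_eq_tent_nodes[of "2 * i + 1"] i by (simp add: lap_nodes_def)
  show ?thesis
  proof (cases "2 * i + 1 \<le> t")
    case True
    then show ?thesis using m a_eq[OF True] t by (simp add: tent_nodes_def field_simps)
  next
    case False
    define k where "k = 2 * t - (2 * i + 1)"
    have k: "k \<le> t" "real k = 2 * real t - 2 * real i - 1"
      using False i by (auto simp: k_def of_nat_diff)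
    have "mid i = 1 - a k / 2" using m False by (simp add: tent_nodes_def k_def)
    also have "\<dots> = (2 * real i + 1) / (2 * real t)"
      using t by (simp add: a_eq[OF k(1)] k(2) field_simps)
    finally show ?thesis .
  qed
qed

lemma xi_on_lap:
  assumes i: "i < t" and y: "y \<in> {a i..a (Suc i)}"
  shows "xi t y = (if even i then real t * y - real i else 1 - (real t * y - real i))"
proof -
  have t: "real t > 0" using t_pos by simp
  have "0 \<le> real t * y - real i" "real t * y - real i \<le> 1"
    using y a_eq[of i] a_eq[of "Suc i"] i t by (auto simp: field_simps)
  then show ?thesis
    using triangle_wave_of_int_add[of "real t * y - real i" "int i"]
    by (simp add: xi_eq_triangle_wave)
qed

lemma same_side_of_half:
  assumes y: "y \<in> {0..1}"
  shows "(\<phi> y \<le> 1/2 \<and> xi t y \<le> 1/2) \<or> (1/2 \<le> \<phi> y \<and> 1/2 \<le> xi t y)"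
proof -
  obtain i where i: "i < t" "y \<in> {a i..a (Suc i)}" using lap_containing y by blast
  have m: "mid i \<in> {a i..a (Suc i)}" "\<phi> (mid i) = 1/2" using mid[OF i(1)] by auto
  have t: "real t > 0" using t_pos by simp
  have "real t * mid i - real i = 1/2" using mid_eq[OF i(1)] t by (simp add: field_simps)
  then have xi_half:
      "xi t y - 1/2 = (if even i then real t * (y - mid i) else real t * (mid i - y))"
    using xi_on_lap[OF i] by (auto simp: algebra_simps)
  have mono: "even i \<Longrightarrow> mono_on {a i..a (Suc i)} \<phi>"
    using lap_increasing[OF i(1)] by (simp add: strict_mono_on_imp_mono_on)
  have anti: "odd i \<Longrightarrow> antimono_on {a i..a (Suc i)} \<phi>"
    using lap_decreasing[OF i(1)] by (simp add: strict_antimono_iff_antimono)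
  consider (below) "y \<le> mid i" | (above) "mid i \<le> y" by linarith
  then show ?thesis
  proof cases
    case below
    then have "real t * (y - mid i) \<le> 0" "0 \<le> real t * (mid i - y)"
      using t by (simp_all add: mult_le_0_iff)
    moreover have "if even i then \<phi> y \<le> 1/2 else 1/2 \<le> \<phi> y"
      using monotone_onD[OF mono i(2) m(1) below] monotone_onD[OF anti i(2) m(1) below] m(2)
      by (cases "even i") simp_all
    ultimately show ?thesis using xi_half by (cases "even i") simp_all
  next
    case above
    then have "0 \<le> real t * (y - mid i)" "real t * (mid i - y) \<le> 0"
      using t by (simp_all add: mult_le_0_iff)
    moreover have "if even i then 1/2 \<le> \<phi> y else \<phi> y \<le> 1/2"
      using monotone_onD[OF mono m(1) i(2) above] monotone_onD[OF anti m(1) i(2) above] m(2)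
      by (cases "even i") simp_all
    ultimately show ?thesis using xi_half by (cases "even i") simp_all
  qed
qed

theorem eq_xi: "x \<in> {0..1} \<Longrightarrow> \<phi> x = xi t x"
proof -
  define D where "D y = \<bar>\<phi> y - xi t y\<bar>" for y
  have xi_range: "xi t y \<in> {0..1}" for y
    using triangle_wave_range[of "real t * y"] by (simp add: xi_eq_triangle_wave)
  have "D y \<le> 1" if "y \<in> {0..1}" for y
    using maps_into[OF that] xi_range[of y] by (auto simp: D_def)
  then have "bdd_above (D ` {0..1})" by (rule bdd_aboveI2)
  moreover have "tent ` {0..1} \<subseteq> {0..1}" using tent_range by auto
  moreover have "2 * D y \<le> D (tent y)" if y: "y \<in> {0..1}" for y
    using tent_dist_same_side[OF same_side_of_half[OF y]]
    by (simp add: D_def commutes[OF y] xi_tent_commute[OF y])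
  ultimately show "x \<in> {0..1} \<Longrightarrow> \<phi> x = xi t x"
    using bounded_expanding_le_zero[of D "{0..1}" tent x] by (simp add: D_def)
qed

end

theorem tent_commuting_eq_xi:
  assumes "continuous_on {0..1} \<phi>" "\<And>x. x \<in> {0..1} \<Longrightarrow> \<phi> x \<in> {0..1}"
    and "\<And>x. x \<in> {0..1} \<Longrightarrow> \<phi> (tent x) = tent (\<phi> x)"
    and "\<exists>x\<in>{0..1}. \<exists>y\<in>{0..1}. \<phi> x \<noteq> \<phi> y" "1 \<le> t" "monotonicity_laps \<phi> t"
    and x: "x \<in> {0..1}"
  shows "\<phi> x = xi t x"
proof -
  obtain a where "a 0 = 0" "a t = 1" "\<forall>i<t. a i < a (Suc i)"
    "\<forall>i<t. monotone_piece \<phi> {a i..a (Suc i)}"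
    "\<forall>i. Suc i < t \<longrightarrow> \<not> monotone_piece \<phi> {a i..a (Suc (Suc i))}"
    using \<open>monotonicity_laps \<phi> t\<close> unfolding monotonicity_laps_def by blast
  then interpret tent_commuting_laps \<phi> t a
    using assms by unfold_locales auto
  show ?thesis using eq_xi[OF x] .
qed

section \<open>Transport along the conjugacy\<close>

lemma homeomorphism_interval_endpoint:
  fixes h :: "real \<Rightarrow> real"
  assumes hom: "homeomorphism {a..b} {a..b} h k" and "a \<le> b"
  shows "k a = a \<or> k a = b"
proof (rule ccontr)
  assume "\<not> ?thesis"
  moreover have "k a \<in> {a..b}" "h (k a) = a" "h a \<in> {a..b}" "h b \<in> {a..b}"
    using hom \<open>a \<le> b\<close> homeomorphism_image1[OF hom] homeomorphism_image2[OF hom]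
      homeomorphism_apply2[OF hom] by auto
  moreover have "inj_on h {a..b}"
    by (rule inj_on_inverseI[of _ k]) (rule homeomorphism_apply1[OF hom])
  ultimately show False
    using continuous_inj_imp_mono[of a "k a" b h] homeomorphism_cont1[OF hom] by auto
qed

lemma homeomorphism_interval_strict_mono:
  fixes h :: "real \<Rightarrow> real"
  assumes hom: "homeomorphism {a..b} {a..b} h k" and ha: "h a = a"
  shows "strict_mono_on {a..b} h"
proof (rule monotone_onI)
  fix x y assume xy: "x \<in> {a..b}" "y \<in> {a..b}" "x < y"
  have inj: "inj_on h {a..b}"
    by (rule inj_on_inverseI[of _ k]) (rule homeomorphism_apply1[OF hom])
  have range: "h z \<in> {a..b}" if "z \<in> {a..b}" for z
    using homeomorphism_image1[OF hom] that by blast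
  show "h x < h y"
  proof (cases "x = a")
    case True
    then have "h y \<noteq> h a" using inj xy by (auto dest: inj_onD)
    then show ?thesis using True ha range[OF xy(2)] by auto
  next
    case False
    have "continuous_on {a..y} h"
      by (rule continuous_on_subset[OF homeomorphism_cont1[OF hom]]) (use xy in auto)
    moreover have "inj_on h {a..y}" by (rule inj_on_subset[OF inj]) (use xy in auto)
    ultimately show ?thesis
      using continuous_inj_imp_mono[of a x y h] False xy ha range[OF xy(1)] by auto
  qed
qed

lemma strict_mono_on_onto_interval_endpoints:
  fixes f :: "real \<Rightarrow> real"
  assumes mono: "strict_mono_on {a..b} f" and onto: "f ` {a..b} = {a..b}" and "a \<le> b"
  shows "f a = a" "f b = b"
proof -
  have "a \<in> f ` {a..b}" "b \<in> f ` {a..b}" using onto \<open>a \<le> b\<close> by auto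
  then obtain x y where x: "x \<in> {a..b}" "f x = a" and y: "y \<in> {a..b}" "f y = b"
    by (metis imageE)
  have "f a \<le> f x" "f y \<le> f b"
    using strict_mono_on_leD[OF mono] x(1) y(1) \<open>a \<le> b\<close> by auto
  moreover have "f a \<in> {a..b}" "f b \<in> {a..b}" using onto \<open>a \<le> b\<close> by auto
  ultimately show "f a = a" "f b = b" using x y by auto
qed

lemma mono_on_image_atLeastAtMost:
  fixes f :: "'a::order \<Rightarrow> 'b::order"
  assumes "mono_on S f" "{u..v} \<subseteq> S"
  shows "f ` {u..v} \<subseteq> {f u..f v}"
proof (rule image_subsetI)
  fix x assume x: "x \<in> {u..v}"
  then have "u \<in> S" "v \<in> S" "x \<in> S" using assms(2) by auto
  then show "f x \<in> {f u..f v}" using monotone_onD[OF assms(1)] x by auto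
qed

lemma monotone_piece_conj:
  fixes h k \<psi> :: "real \<Rightarrow> real"
  assumes hom: "homeomorphism {0..1} {0..1} h k"
    and h_mono: "mono_on {0..1} h" and k_mono: "mono_on {0..1} k"
    and \<psi>: "\<psi> ` {0..1} \<subseteq> {0..1}" and uv: "u \<in> {0..1}" "v \<in> {0..1}"
    and piece: "monotone_piece \<psi> {u..v}"
  shows "monotone_piece (\<lambda>x. k (\<psi> (h x))) {k u..k v}"
proof -
  have mp: "monotone_piece f S" if "mono_on {0..1} f" "S \<subseteq> {0..1}" for f S
    using that unfolding monotone_piece_def by (blast intro: monotone_on_subset)
  have kuv: "{k u..k v} \<subseteq> {0..1}" using homeomorphism_image2[OF hom] uv by auto
  have "h ` {k u..k v} \<subseteq> {h (k u)..h (k v)}" by (rule mono_on_image_atLeastAtMost[OF h_mono kuv])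
  then have h_into: "h ` {k u..k v} \<subseteq> {u..v}" using homeomorphism_apply2[OF hom] uv by simp
  then have "monotone_piece (\<lambda>x. \<psi> (h x)) {k u..k v}"
    by (rule monotone_piece_compose[OF piece mp[OF h_mono kuv]])
  moreover have "(\<lambda>x. \<psi> (h x)) ` {k u..k v} \<subseteq> {0..1}"
  proof (rule image_subsetI)
    fix x assume "x \<in> {k u..k v}"
    then have "h x \<in> {u..v}" using h_into by blast
    then have "h x \<in> {0..1}" using uv by auto
    then show "\<psi> (h x) \<in> {0..1}" using \<psi> by blast
  qed
  ultimately show ?thesis using monotone_piece_compose[OF mp[OF k_mono order_refl]] by blast
qed

lemma homeomorphism_unit_interval_increasing:
  fixes h k :: "real \<Rightarrow> real"
  assumes hom: "homeomorphism {0..1} {0..1} h k" and h0: "h 0 = 0"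
  shows "strict_mono_on {0..1} h" "strict_mono_on {0..1} k" "k 0 = 0" "k 1 = 1"
proof -
  show "strict_mono_on {0..1} h" by (rule homeomorphism_interval_strict_mono[OF hom h0])
  show k0: "k 0 = 0" using homeomorphism_apply1[OF hom, of 0] h0 by simp
  show k_mono: "strict_mono_on {0..1} k"
    by (rule homeomorphism_interval_strict_mono[OF homeomorphism_symD[OF hom] k0])
  show "k 1 = 1"
    using strict_mono_on_onto_interval_endpoints(2)[OF k_mono homeomorphism_image2[OF hom]] by simp
qed

lemma monotone_piece_conj_iff:
  fixes h k \<psi> :: "real \<Rightarrow> real"
  assumes hom: "homeomorphism {0..1} {0..1} h k" and h0: "h 0 = 0"
    and \<psi>: "\<psi> ` {0..1} \<subseteq> {0..1}" and uv: "u \<in> {0..1}" "v \<in> {0..1}"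
  shows "monotone_piece (\<lambda>x. k (\<psi> (h x))) {k u..k v} \<longleftrightarrow> monotone_piece \<psi> {u..v}"
proof
  note mono =
    homeomorphism_unit_interval_increasing(1,2)[OF hom h0, THEN strict_mono_on_imp_mono_on]
  show "monotone_piece \<psi> {u..v} \<Longrightarrow> monotone_piece (\<lambda>x. k (\<psi> (h x))) {k u..k v}"
    by (rule monotone_piece_conj[OF hom mono \<psi> uv])
  assume piece: "monotone_piece (\<lambda>x. k (\<psi> (h x))) {k u..k v}"
  have "(\<lambda>x. k (\<psi> (h x))) ` {0..1} \<subseteq> {0..1}"
  proof (rule image_subsetI)
    fix x :: real assume "x \<in> {0..1}"
    then have "\<psi> (h x) \<in> {0..1}" using homeomorphism_image1[OF hom] \<psi> by blast
    then show "k (\<psi> (h x)) \<in> {0..1}" using homeomorphism_image2[OF hom] by blast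
  qed
  moreover have "k u \<in> {0..1}" "k v \<in> {0..1}" using homeomorphism_image2[OF hom] uv by auto
  ultimately have "monotone_piece (\<lambda>x. h (k (\<psi> (h (k x))))) {h (k u)..h (k v)}"
    using monotone_piece_conj[OF homeomorphism_symD[OF hom] mono(2,1)] piece by blast
  moreover have "h (k (\<psi> (h (k x)))) = \<psi> x" if "x \<in> {u..v}" for x
  proof -
    have "x \<in> {0..1}" using that uv by auto
    then show ?thesis using homeomorphism_apply2[OF hom] \<psi> by (auto simp: image_subset_iff)
  qed
  ultimately show "monotone_piece \<psi> {u..v}"
    using monotone_piece_cong[of "{u..v}" "\<lambda>x. h (k (\<psi> (h (k x))))" \<psi>]
      homeomorphism_apply2[OF hom] uv by simp
qed

lemma monotonicity_laps_conj:
  fixes h k \<psi> :: "real \<Rightarrow> real"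
  assumes hom: "homeomorphism {0..1} {0..1} h k" and h0: "h 0 = 0"
    and \<psi>: "\<psi> ` {0..1} \<subseteq> {0..1}" and laps: "monotonicity_laps \<psi> t"
  shows "monotonicity_laps (\<lambda>x. k (\<psi> (h x))) t"
proof -
  note k = homeomorphism_unit_interval_increasing(2-4)[OF hom h0]
  obtain a where a: "a 0 = 0" "a t = 1" "\<forall>i<t. a i < a (Suc i)"
    "\<forall>i<t. monotone_piece \<psi> {a i..a (Suc i)}"
    "\<forall>i. Suc i < t \<longrightarrow> \<not> monotone_piece \<psi> {a i..a (Suc (Suc i))}"
    using laps unfolding monotonicity_laps_def by blast
  have "strict_mono_on {..t} a" using a(3) by (intro strict_mono_on_atMost_if_Suc) auto
  then have a01: "a i \<in> {0..1}" if "i \<le> t" for i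
    using strict_mono_on_leD[of "{..t}" a 0 i] strict_mono_on_leD[of "{..t}" a i t] that a(1,2)
    by auto
  note conj = monotone_piece_conj_iff[OF hom h0 \<psi> a01 a01]
  show ?thesis unfolding monotonicity_laps_def
  proof (intro exI[of _ "\<lambda>i. k (a i)"] conjI allI impI)
    show "k (a 0) = 0" "k (a t) = 1" using a(1,2) k(2,3) by simp_all
    show "k (a i) < k (a (Suc i))" if "i < t" for i
      using strict_mono_onD[OF k(1) a01 a01] a(3) that by simp
    show "monotone_piece (\<lambda>x. k (\<psi> (h x))) {k (a i)..k (a (Suc i))}" if "i < t" for i
      using conj a(4) that by simp
    show "\<not> monotone_piece (\<lambda>x. k (\<psi> (h x))) {k (a i)..k (a (Suc (Suc i)))}" if "Suc i < t" for i
      using conj a(5) that by simp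
  qed
qed

lemma conjugacy_fixes_zero:
  fixes g h k :: "real \<Rightarrow> real"
  assumes hom: "homeomorphism {0..1} {0..1} h k"
    and conj: "\<forall>x\<in>{0..1}. h (tent x) = g (h x)" and g0: "g 0 = 0"
  shows "h 0 = 0"
proof -
  have "k 0 \<noteq> 1"
  proof
    assume "k 0 = 1"
    moreover have "h (k 0) = 0" by (rule homeomorphism_apply2[OF hom]) simp
    ultimately have "h 1 = 0" by simp
    moreover have "h (tent 1) = g (h 1)" using conj by simp
    ultimately have "h 0 = h 1" using g0 by (simp add: tent_def)
    then show False
      using homeomorphism_apply1[OF hom, of 0] homeomorphism_apply1[OF hom, of 1] by fastforce
  qed
  then have "k 0 = 0" using homeomorphism_interval_endpoint[OF hom] by simp
  then show ?thesis using homeomorphism_apply2[OF hom, of 0] by simp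
qed

lemma conjugate_commutes_tent:
  fixes g h k \<psi> :: "real \<Rightarrow> real"
  assumes hom: "homeomorphism {0..1} {0..1} h k"
    and conj: "\<forall>x\<in>{0..1}. h (tent x) = g (h x)"
    and comm: "\<forall>x\<in>{0..1}. g (\<psi> x) = \<psi> (g x)" and \<psi>: "\<psi> ` {0..1} \<subseteq> {0..1}"
    and x: "x \<in> {0..1}"
  shows "k (\<psi> (h (tent x))) = tent (k (\<psi> (h x)))"
proof -
  have hx: "h x \<in> {0..1}" using homeomorphism_image1[OF hom] x by blast
  then have "\<psi> (h x) \<in> {0..1}" using \<psi> by blast
  define z where "z = k (\<psi> (h x))"
  have z: "z \<in> {0..1}" using homeomorphism_image2[OF hom] \<open>\<psi> (h x) \<in> {0..1}\<close> by (auto simp: z_def)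
  have hz: "h z = \<psi> (h x)"
    using homeomorphism_apply2[OF hom \<open>\<psi> (h x) \<in> {0..1}\<close>] by (simp add: z_def)
  have "k (\<psi> (h (tent x))) = k (\<psi> (g (h x)))" using conj x by simp
  also have "\<dots> = k (g (h z))" using comm hx hz by simp
  also have "\<dots> = k (h (tent z))" using conj z by simp
  also have "\<dots> = tent z" using homeomorphism_apply1[OF hom tent_range[OF z]] .
  finally show ?thesis by (simp add: z_def)
qed

lemma conjugate_nonconstant:
  assumes hom: "homeomorphism S T h k" and \<psi>: "\<psi> ` T \<subseteq> T"
    and nonconst: "\<exists>x\<in>T. \<exists>y\<in>T. \<psi> x \<noteq> \<psi> y"
  shows "\<exists>u\<in>S. \<exists>v\<in>S. k (\<psi> (h u)) \<noteq> k (\<psi> (h v))"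
proof -
  obtain x y where xy: "x \<in> T" "y \<in> T" "\<psi> x \<noteq> \<psi> y" using nonconst by blast
  have "k (\<psi> x) \<noteq> k (\<psi> y)"
  proof
    assume "k (\<psi> x) = k (\<psi> y)"
    then have "h (k (\<psi> x)) = h (k (\<psi> y))" by simp
    then show False using homeomorphism_apply2[OF hom] \<psi> xy by (auto simp: image_subset_iff)
  qed
  moreover have "k x \<in> S" "k y \<in> S" using homeomorphism_image2[OF hom] xy by auto
  ultimately show ?thesis using homeomorphism_apply2[OF hom] xy by metis
qed

theorem lemma4p1:
  fixes g h k \<psi> :: "real \<Rightarrow> real" and t :: nat
  assumes g_maps: "g ` {0..1} \<subseteq> {0..1}"
    and g_pl: "piecewise_linear g"
    and g_um: "unimodal g"
    and h_homeo: "homeomorphism {0..1} {0..1} h k"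
    and conj: "\<forall>x \<in> {0..1}. h (tent x) = g (h x)"
    and psi_cont: "continuous_on {0..1} \<psi>"
    and psi_maps: "\<psi> ` {0..1} \<subseteq> {0..1}"
    and psi_nonconst: "\<exists>x \<in> {0..1}. \<exists>y \<in> {0..1}. \<psi> x \<noteq> \<psi> y"
    and comm: "\<forall>x \<in> {0..1}. g (\<psi> x) = \<psi> (g x)"
    and t_pos: "t \<ge> 1"
    and laps: "monotonicity_laps \<psi> t"
  shows "\<forall>x \<in> {0..1}. \<psi> x = h (xi t (k x))"
proof
  fix x :: real assume x: "x \<in> {0..1}"
  have h0: "h 0 = 0" using conjugacy_fixes_zero[OF h_homeo conj] g_um by (auto simp: unimodal_def)
  note hk = homeomorphism_apply2[OF h_homeo]
    and h_img = homeomorphism_image1[OF h_homeo] and k_img = homeomorphism_image2[OF h_homeo]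
  note laps_conj = monotonicity_laps_conj[OF h_homeo h0 psi_maps laps]
  have "k (\<psi> (h (k x))) = xi t (k x)"
  proof (rule tent_commuting_eq_xi[OF _ _ _ _ t_pos laps_conj])
    have "continuous_on {0..1} (\<lambda>x. \<psi> (h x))"
      by (rule continuous_on_compose2[OF psi_cont homeomorphism_cont1[OF h_homeo]])
        (use h_img in auto)
    then show "continuous_on {0..1} (\<lambda>x. k (\<psi> (h x)))"
      by (rule continuous_on_compose2[OF homeomorphism_cont2[OF h_homeo]])
        (use h_img psi_maps in auto)
    show "k (\<psi> (h y)) \<in> {0..1}" if "y \<in> {0..1}" for y using that h_img k_img psi_maps by blast
    show "k (\<psi> (h (tent y))) = tent (k (\<psi> (h y)))" if "y \<in> {0..1}" for y
      by (rule conjugate_commutes_tent[OF h_homeo conj comm psi_maps that])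
    show "\<exists>u\<in>{0..1}. \<exists>v\<in>{0..1}. k (\<psi> (h u)) \<noteq> k (\<psi> (h v))"
      by (rule conjugate_nonconstant[OF h_homeo psi_maps psi_nonconst])
    show "k x \<in> {0..1}" using x k_img by blast
  qed
  moreover have "\<psi> x \<in> {0..1}" using x psi_maps by blast
  ultimately show "\<psi> x = h (xi t (k x))" using hk x by metis
qed

end
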